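(* Let $L$ be a nonassociative code loop and let $x\in L$ with $x^2=-1$. If the elementary mapping $\tau_x$ is a half-automorphism of $L$, then $x\notin N(L)$.
   Context: A code loop is a finite Moufang loop (loop satisfying $(x\cdot zx)y=x(z\cdot xy)$) with a unique nontrivial square, denoted $-1$. $N(L)$ denotes the nucleus of $L$, the set of elements $a$ with $(a,y,z)=(y,a,z)=(y,z,a)=1$ for all $y,z$, where the associator is defined by $(xy)z=(x(yz))(x,y,z)$. A half-automorphism is a bijection $f$ with $f(xy)\in\{f(x)f(y),f(y)f(x)\}$ for all $x,y$. For $c\in L$, $\tau_c(y)=y^{-1}$ if $y\in\{c,c^{-1}\}$ and $\tau_c(y)=y$ otherwise. *)

theory Defs
  imports Main
begin

definition is_loop :: "('a \<Rightarrow> 'a \<Rightarrow> 'a) \<Rightarrow> 'a \<Rightarrow> bool" where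
  "is_loop mult e \<longleftrightarrow>
     (\<forall>x. mult e x = x \<and> mult x e = x) \<and>
     (\<forall>a b. \<exists>!x. mult a x = b) \<and>
     (\<forall>a b. \<exists>!y. mult y a = b)"

definition moufang :: "('a \<Rightarrow> 'a \<Rightarrow> 'a) \<Rightarrow> bool" where
  "moufang mult \<longleftrightarrow>
     (\<forall>x y z. mult (mult x (mult z x)) y = mult x (mult z (mult x y)))"

text \<open>Code loop: a finite Moufang loop with a unique nontrivial square m (the element -1).\<close>

definition code_loop :: "('a \<Rightarrow> 'a \<Rightarrow> 'a) \<Rightarrow> 'a \<Rightarrow> 'a \<Rightarrow> bool" where
  "code_loop mult e m \<longleftrightarrow>
     finite (UNIV :: 'a set) \<and> is_loop mult e \<and> moufang mult \<and>
     m \<noteq> e \<and> {s. \<exists>x. mult x x = s} = {e, m}"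

definition associative_loop :: "('a \<Rightarrow> 'a \<Rightarrow> 'a) \<Rightarrow> bool" where
  "associative_loop mult \<longleftrightarrow> (\<forall>x y z. mult (mult x y) z = mult x (mult y z))"

definition associator :: "('a \<Rightarrow> 'a \<Rightarrow> 'a) \<Rightarrow> 'a \<Rightarrow> 'a \<Rightarrow> 'a \<Rightarrow> 'a" where
  "associator mult x y z = (THE a. mult (mult x y) z = mult (mult x (mult y z)) a)"

definition nucleus :: "('a \<Rightarrow> 'a \<Rightarrow> 'a) \<Rightarrow> 'a \<Rightarrow> 'a set" where
  "nucleus mult e = {a. \<forall>y z. associator mult a y z = e \<and> associator mult y a z = e
                                \<and> associator mult y z a = e}"

text \<open>Inverse in a loop (for Moufang loops, two-sided).\<close>

definition loop_inv :: "('a \<Rightarrow> 'a \<Rightarrow> 'a) \<Rightarrow> 'a \<Rightarrow> 'a \<Rightarrow> 'a" where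
  "loop_inv mult e x = (THE y. mult x y = e)"

definition half_automorphism :: "('a \<Rightarrow> 'a \<Rightarrow> 'a) \<Rightarrow> ('a \<Rightarrow> 'a) \<Rightarrow> bool" where
  "half_automorphism mult f \<longleftrightarrow>
     bij f \<and> (\<forall>x y. f (mult x y) \<in> {mult (f x) (f y), mult (f y) (f x)})"

definition tau :: "('a \<Rightarrow> 'a \<Rightarrow> 'a) \<Rightarrow> 'a \<Rightarrow> 'a \<Rightarrow> 'a \<Rightarrow> 'a" where
  "tau mult e c y = (if y = c \<or> y = loop_inv mult e c then loop_inv mult e y else y)"

end

theory Submission
  imports Defs
begin

(*
  If x is nuclear with x^2 = -1, then S = {1, -1, x, x^-1} is a nuclear subgroup, and tau_x
  swaps x and x^-1 and fixes everything else. For y outside S also xy lies outside S, so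
  tau_x(xy) = xy must equal x^-1 y or y x^-1; the first is impossible, hence every y outside
  S acts on S by inversion: sy = ys^-1. If y, z and yz were all outside S, comparing (yz)x
  with x(yz) = (yz)x^-1 would give x = x^-1; so S has index at most 2, L = S u yS, and a
  direct computation using left alternativity and the centrality of y^2 shows that every y
  outside S is nuclear. Thus N(L) = L and L would be associative.
*)

locale loop =
  fixes mult :: "'a \<Rightarrow> 'a \<Rightarrow> 'a" (infixl "\<cdot>" 70) and e :: 'a
  assumes is_loop: "is_loop mult e"
begin

abbreviation loop_inverse :: "'a \<Rightarrow> 'a" ("_\<^sup>-\<^sup>1" [1000] 999) where
  "a\<^sup>-\<^sup>1 \<equiv> loop_inv mult e a"

lemma left_id [simp]: "e \<cdot> a = a"
  using is_loop by (simp add: is_loop_def)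

lemma right_id [simp]: "a \<cdot> e = a"
  using is_loop by (simp add: is_loop_def)

lemma left_cancel [simp]: "a \<cdot> b = a \<cdot> c \<longleftrightarrow> b = c"
  using is_loop unfolding is_loop_def by metis

lemma right_cancel [simp]: "b \<cdot> a = c \<cdot> a \<longleftrightarrow> b = c"
  using is_loop unfolding is_loop_def by metis

lemma mult_inverse: "a \<cdot> a\<^sup>-\<^sup>1 = e"
proof -
  have "\<exists>!b. a \<cdot> b = e"
    using is_loop by (simp add: is_loop_def)
  then show ?thesis
    unfolding loop_inv_def by (rule theI')
qed

lemma inverse_eqI: "a \<cdot> b = e \<Longrightarrow> a\<^sup>-\<^sup>1 = b"
  using mult_inverse[of a] by (metis left_cancel)

lemma associator_eq_id_iff: "associator mult a b c = e \<longleftrightarrow> (a \<cdot> b) \<cdot> c = a \<cdot> (b \<cdot> c)"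
proof -
  have "\<exists>!t. (a \<cdot> b) \<cdot> c = (a \<cdot> (b \<cdot> c)) \<cdot> t"
    using is_loop unfolding is_loop_def by metis
  then have "(a \<cdot> b) \<cdot> c = (a \<cdot> (b \<cdot> c)) \<cdot> associator mult a b c"
    unfolding associator_def by (rule theI')
  then show ?thesis
    by (metis left_cancel right_id)
qed

lemma in_nucleus_iff:
  "a \<in> nucleus mult e \<longleftrightarrow>
     (\<forall>y z. (a \<cdot> y) \<cdot> z = a \<cdot> (y \<cdot> z) \<and> (y \<cdot> a) \<cdot> z = y \<cdot> (a \<cdot> z) \<and> (y \<cdot> z) \<cdot> a = y \<cdot> (z \<cdot> a))"
  by (simp add: nucleus_def associator_eq_id_iff)

lemma nucleus_left: "a \<in> nucleus mult e \<Longrightarrow> (a \<cdot> y) \<cdot> z = a \<cdot> (y \<cdot> z)"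
  by (simp add: in_nucleus_iff)

lemma nucleus_middle: "a \<in> nucleus mult e \<Longrightarrow> (y \<cdot> a) \<cdot> z = y \<cdot> (a \<cdot> z)"
  by (simp add: in_nucleus_iff)

lemma nucleus_right: "a \<in> nucleus mult e \<Longrightarrow> (y \<cdot> z) \<cdot> a = y \<cdot> (z \<cdot> a)"
  by (simp add: in_nucleus_iff)

lemma id_in_nucleus: "e \<in> nucleus mult e"
  by (simp add: in_nucleus_iff)

lemma nucleus_mult_closed:
  assumes a: "a \<in> nucleus mult e" and b: "b \<in> nucleus mult e"
  shows "a \<cdot> b \<in> nucleus mult e"
  unfolding in_nucleus_iff
proof (intro allI conjI)
  fix y z
  show "(a \<cdot> b) \<cdot> y \<cdot> z = a \<cdot> b \<cdot> (y \<cdot> z)"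
    by (simp add: a b nucleus_left nucleus_middle)
  show "y \<cdot> (a \<cdot> b) \<cdot> z = y \<cdot> (a \<cdot> b \<cdot> z)"
    by (metis a b nucleus_left nucleus_middle)
  show "y \<cdot> z \<cdot> (a \<cdot> b) = y \<cdot> (z \<cdot> (a \<cdot> b))"
    by (metis a b nucleus_right)
qed

lemma associative_if_nucleus_UNIV:
  "(\<And>a. a \<in> nucleus mult e) \<Longrightarrow> associative_loop mult"
  by (simp add: associative_loop_def nucleus_left)

end

locale moufang_code_loop =
  fixes mult :: "'a \<Rightarrow> 'a \<Rightarrow> 'a" (infixl "\<cdot>" 70) and e m :: 'a
  assumes code_loop: "code_loop mult e m"

sublocale moufang_code_loop \<subseteq> loop
  using code_loop by unfold_locales (simp add: code_loop_def)

context moufang_code_loop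
begin

lemma left_alternative: "(a \<cdot> a) \<cdot> b = a \<cdot> (a \<cdot> b)"
  using code_loop unfolding code_loop_def moufang_def by (metis left_id)

lemma square_cases: "a \<cdot> a = e \<or> a \<cdot> a = m"
proof -
  have "{s. \<exists>x. x \<cdot> x = s} = {e, m}"
    using code_loop by (simp add: code_loop_def)
  then show ?thesis by blast
qed

lemma minus_one_ne_id: "m \<noteq> e"
  using code_loop by (simp add: code_loop_def)

lemma square_minus_one: "m \<cdot> m = e"
  using square_cases[of m] minus_one_ne_id by (metis right_id left_cancel)

end

locale nuclear_sqrt_minus_one = moufang_code_loop +
  fixes x :: 'a
  assumes x_square: "x \<cdot> x = m" and x_nuclear: "x \<in> nucleus mult e"
begin

(* The cyclic group generated by x; its fourth element x * m is x^-1. *)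

definition S :: "'a set" where
  "S = {e, m, x, x \<cdot> m}"

lemma minus_one_nuclear: "m \<in> nucleus mult e"
  using nucleus_mult_closed[OF x_nuclear x_nuclear] by (simp add: x_square)

lemma x_minus_one_nuclear: "x \<cdot> m \<in> nucleus mult e"
  by (rule nucleus_mult_closed[OF x_nuclear minus_one_nuclear])

lemma S_nuclear: "s \<in> S \<Longrightarrow> s \<in> nucleus mult e"
  using id_in_nucleus minus_one_nuclear x_nuclear x_minus_one_nuclear by (auto simp: S_def)

lemma minus_one_mult_x: "m \<cdot> x = x \<cdot> m"
  by (metis x_square nucleus_left[OF x_nuclear])

lemma x_mult_x_minus_one: "x \<cdot> (x \<cdot> m) = e"
  by (metis x_square square_minus_one nucleus_left[OF x_nuclear])

lemma x_minus_one_mult_x: "x \<cdot> m \<cdot> x = e"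
  by (metis minus_one_mult_x x_mult_x_minus_one nucleus_left[OF x_nuclear])

lemma x_minus_one_mult_minus_one: "x \<cdot> m \<cdot> m = x"
  by (metis square_minus_one right_id nucleus_left[OF x_nuclear])

lemma minus_one_mult_x_minus_one: "m \<cdot> (x \<cdot> m) = x"
  by (metis minus_one_mult_x x_minus_one_mult_minus_one nucleus_left[OF minus_one_nuclear])

lemma x_minus_one_square: "x \<cdot> m \<cdot> (x \<cdot> m) = m"
  by (metis minus_one_mult_x_minus_one x_square nucleus_left[OF x_nuclear])

lemmas S_mult_table =
  x_square square_minus_one minus_one_mult_x x_mult_x_minus_one x_minus_one_mult_x
  x_minus_one_mult_minus_one minus_one_mult_x_minus_one x_minus_one_square

lemma x_ne_x_minus_one: "x \<noteq> x \<cdot> m"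
  using minus_one_ne_id by (metis left_cancel right_id)

lemma S_mult_closed: "s \<in> S \<Longrightarrow> t \<in> S \<Longrightarrow> s \<cdot> t \<in> S"
  by (auto simp: S_def S_mult_table)

lemma inverse_id: "e\<^sup>-\<^sup>1 = e"
  by (simp add: inverse_eqI)

lemma inverse_minus_one: "m\<^sup>-\<^sup>1 = m"
  by (simp add: inverse_eqI square_minus_one)

lemma inverse_x: "x\<^sup>-\<^sup>1 = x \<cdot> m"
  by (simp add: inverse_eqI x_mult_x_minus_one)

lemma inverse_x_minus_one: "(x \<cdot> m)\<^sup>-\<^sup>1 = x"
  by (simp add: inverse_eqI x_minus_one_mult_x)

lemma S_inverse_closed: "s \<in> S \<Longrightarrow> s\<^sup>-\<^sup>1 \<in> S"
  by (auto simp: S_def inverse_id inverse_minus_one inverse_x inverse_x_minus_one)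

lemma S_inverse_inverse: "s \<in> S \<Longrightarrow> (s\<^sup>-\<^sup>1)\<^sup>-\<^sup>1 = s"
  by (auto simp: S_def inverse_id inverse_minus_one inverse_x inverse_x_minus_one)

lemma S_mult_outside:
  assumes s: "s \<in> S" and y: "y \<notin> S"
  shows "s \<cdot> y \<notin> S"
proof
  assume t: "s \<cdot> y \<in> S"
  have "s \<cdot> (s\<^sup>-\<^sup>1 \<cdot> (s \<cdot> y)) = s \<cdot> y"
    by (metis mult_inverse left_id nucleus_left[OF S_nuclear[OF s]])
  then have "y = s\<^sup>-\<^sup>1 \<cdot> (s \<cdot> y)"
    by simp
  with y show False
    using S_mult_closed S_inverse_closed s t by metis
qed

end

locale tau_half_automorphism = nuclear_sqrt_minus_one +
  assumes tau_half_aut: "half_automorphism mult (tau mult e x)"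
begin

lemma tau_x: "tau mult e x x = x \<cdot> m"
  by (simp add: tau_def inverse_x)

lemma tau_x_minus_one: "tau mult e x (x \<cdot> m) = x"
  by (simp add: tau_def inverse_x inverse_x_minus_one)

lemma tau_outside_S: "y \<notin> S \<Longrightarrow> tau mult e x y = y"
  by (simp add: tau_def inverse_x S_def)

lemma tau_mult_outside_S:
  assumes "s \<in> S" "y \<notin> S"
  shows "s \<cdot> y \<in> {tau mult e x s \<cdot> y, y \<cdot> tau mult e x s}"
  using tau_half_aut assms S_mult_outside tau_outside_S
  unfolding half_automorphism_def by metis

lemma x_twisted_comm: "y \<notin> S \<Longrightarrow> x \<cdot> y = y \<cdot> (x \<cdot> m)"
  using tau_mult_outside_S[of x y] x_ne_x_minus_one by (simp add: S_def tau_x)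

lemma x_minus_one_twisted_comm: "y \<notin> S \<Longrightarrow> x \<cdot> m \<cdot> y = y \<cdot> x"
  using tau_mult_outside_S[of "x \<cdot> m" y] x_ne_x_minus_one by (simp add: S_def tau_x_minus_one)

lemma minus_one_central: "m \<cdot> a = a \<cdot> m"
proof (cases "a \<in> S")
  case True
  then show ?thesis
    by (auto simp: S_def S_mult_table)
next
  case False
  have "m \<cdot> a = x \<cdot> (x \<cdot> a)"
    by (metis x_square nucleus_left[OF x_nuclear])
  also have "\<dots> = (x \<cdot> a) \<cdot> (x \<cdot> m)"
    by (metis False x_twisted_comm nucleus_right[OF x_minus_one_nuclear])
  also have "\<dots> = a \<cdot> m"
    by (metis False x_twisted_comm x_minus_one_square nucleus_right[OF x_minus_one_nuclear])
  finally show ?thesis .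
qed

lemma S_inverted_by_outside: "y \<notin> S \<Longrightarrow> s \<in> S \<Longrightarrow> s \<cdot> y = y \<cdot> s\<^sup>-\<^sup>1"
  by (auto simp: S_def inverse_id inverse_minus_one inverse_x inverse_x_minus_one
      minus_one_central x_twisted_comm x_minus_one_twisted_comm)

lemma outside_mult_outside:
  assumes y: "y \<notin> S" and z: "z \<notin> S"
  shows "y \<cdot> z \<in> S"
proof (rule ccontr)
  assume yz: "y \<cdot> z \<notin> S"
  have "(y \<cdot> z) \<cdot> x = y \<cdot> (x \<cdot> m \<cdot> z)"
    by (metis z x_minus_one_twisted_comm nucleus_right[OF x_nuclear])
  also have "\<dots> = x \<cdot> (y \<cdot> z)"
    by (metis y x_twisted_comm nucleus_left[OF x_nuclear] nucleus_middle[OF x_minus_one_nuclear])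
  also have "\<dots> = (y \<cdot> z) \<cdot> (x \<cdot> m)"
    by (rule x_twisted_comm[OF yz])
  finally show False
    using x_ne_x_minus_one by simp
qed

context
  fixes y :: 'a
  assumes y: "y \<notin> S"
begin

lemma outside_square_in_S: "y \<cdot> y \<in> S"
  using square_cases[of y] by (auto simp: S_def)

lemma outside_square_nuclear: "y \<cdot> y \<in> nucleus mult e"
  by (rule S_nuclear[OF outside_square_in_S])

lemma outside_square_central: "(y \<cdot> y) \<cdot> a = a \<cdot> (y \<cdot> y)"
  using square_cases[of y] minus_one_central by (metis left_id right_id)

lemma outside_square_square: "(y \<cdot> y) \<cdot> (y \<cdot> y) = e"
  using square_cases[of y] square_minus_one by (metis left_id)

lemma S_or_coset:
  obtains "a \<in> S" | t where "t \<in> S" "a = y \<cdot> t"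
proof (cases "a \<in> S")
  case False
  let ?t = "(y \<cdot> y) \<cdot> (y \<cdot> a)"
  have "?t \<in> S"
    using S_mult_closed outside_square_in_S outside_mult_outside[OF y False] by blast
  moreover have "y \<cdot> ?t = a"
    by (metis outside_square_central outside_square_square left_alternative left_id
        nucleus_left[OF outside_square_nuclear] nucleus_middle[OF outside_square_nuclear])
  ultimately show ?thesis
    using that by metis
qed

lemma outside_left_nuclear: "(y \<cdot> a) \<cdot> b = y \<cdot> (a \<cdot> b)"
proof (cases a rule: S_or_coset)
  case 1
  then show ?thesis
    by (simp add: S_nuclear nucleus_middle)
next
  case (2 t)
  have "(y \<cdot> a) \<cdot> b = ((y \<cdot> y) \<cdot> t) \<cdot> b"
    by (simp add: 2 left_alternative)
  also have "\<dots> = (y \<cdot> y) \<cdot> (t \<cdot> b)"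
    by (rule nucleus_left[OF outside_square_nuclear])
  also have "\<dots> = y \<cdot> (a \<cdot> b)"
    by (simp add: 2 left_alternative nucleus_middle[OF S_nuclear])
  finally show ?thesis .
qed

lemma outside_right_square: "(a \<cdot> y) \<cdot> y = a \<cdot> (y \<cdot> y)"
proof (cases a rule: S_or_coset)
  case 1
  then show ?thesis
    by (simp add: S_nuclear nucleus_left)
next
  case (2 t)
  have "(a \<cdot> y) \<cdot> y = (y \<cdot> (y \<cdot> t\<^sup>-\<^sup>1)) \<cdot> y"
    by (simp add: 2 nucleus_middle[OF S_nuclear] S_inverted_by_outside[OF y])
  also have "\<dots> = (y \<cdot> y) \<cdot> (t\<^sup>-\<^sup>1 \<cdot> y)"
    by (simp add: nucleus_left[OF outside_square_nuclear] flip: left_alternative)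
  also have "\<dots> = (y \<cdot> y) \<cdot> a"
    by (simp add: 2 S_inverted_by_outside[OF y] S_inverse_closed S_inverse_inverse)
  also have "\<dots> = a \<cdot> (y \<cdot> y)"
    by (rule outside_square_central)
  finally show ?thesis .
qed

lemma outside_right_nuclear: "(a \<cdot> b) \<cdot> y = a \<cdot> (b \<cdot> y)"
proof (cases b rule: S_or_coset)
  case 1
  then show ?thesis
    by (simp add: S_nuclear nucleus_middle)
next
  case (2 s)
  have "(a \<cdot> b) \<cdot> y = ((a \<cdot> y) \<cdot> s) \<cdot> y"
    by (simp add: 2 nucleus_right[OF S_nuclear])
  also have "\<dots> = (a \<cdot> y) \<cdot> (y \<cdot> s\<^sup>-\<^sup>1)"
    by (simp add: 2 nucleus_middle[OF S_nuclear] S_inverted_by_outside[OF y])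
  also have "\<dots> = ((a \<cdot> y) \<cdot> y) \<cdot> s\<^sup>-\<^sup>1"
    by (simp add: 2 S_inverse_closed nucleus_right[OF S_nuclear])
  also have "\<dots> = a \<cdot> ((y \<cdot> y) \<cdot> s\<^sup>-\<^sup>1)"
    by (simp add: outside_right_square nucleus_middle[OF outside_square_nuclear])
  also have "\<dots> = a \<cdot> (b \<cdot> y)"
    by (simp add: 2 left_alternative nucleus_middle[OF S_nuclear] S_inverted_by_outside[OF y])
  finally show ?thesis .
qed

lemma outside_middle_nuclear: "(a \<cdot> y) \<cdot> b = a \<cdot> (y \<cdot> b)"
proof (cases a rule: S_or_coset)
  case 1
  then show ?thesis
    by (simp add: S_nuclear nucleus_left)
next
  case (2 t)
  have "(a \<cdot> y) \<cdot> b = ((y \<cdot> y) \<cdot> t\<^sup>-\<^sup>1) \<cdot> b"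
    by (simp add: 2 nucleus_middle[OF S_nuclear] S_inverted_by_outside[OF y] left_alternative)
  also have "\<dots> = y \<cdot> ((t \<cdot> y) \<cdot> b)"
    by (simp add: 2 nucleus_left[OF outside_square_nuclear] left_alternative
        outside_left_nuclear S_inverted_by_outside[OF y])
  also have "\<dots> = a \<cdot> (y \<cdot> b)"
    by (simp add: 2 nucleus_left[OF S_nuclear] outside_left_nuclear)
  finally show ?thesis .
qed

lemma outside_nuclear: "y \<in> nucleus mult e"
  by (simp add: in_nucleus_iff outside_left_nuclear outside_middle_nuclear outside_right_nuclear)

end

lemma associative: "associative_loop mult"
  by (metis associative_if_nucleus_UNIV S_nuclear outside_nuclear)

end

theorem corollary5p3:
  fixes mult :: "'a \<Rightarrow> 'a \<Rightarrow> 'a" and e m x :: 'a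
  assumes "code_loop mult e m"
    and "\<not> associative_loop mult"
    and "mult x x = m"
    and "half_automorphism mult (tau mult e x)"
  shows "x \<notin> nucleus mult e"
proof
  assume "x \<in> nucleus mult e"
  with assms interpret tau_half_automorphism mult e m x
    by unfold_locales
  show False
    using associative assms(2) by contradiction
qed

end
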